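(* Assume hypothesis (A). For every $\gamma\in\mathbb{R}_+^d$ and every $1\le i\le d$, the function $f_i(x)=\exp(\overrightarrow{\gamma_i}\cdot x)$ satisfies $$\mathcal{L}f_i(x)=\frac{\gamma_i}{G_{ii}}\Bigl(\nu_i-\mathbf{1}_{\{x^i>0\}}\frac{\mu_i}{1+\gamma_i}\Bigr)f_i(x),\qquad x\in\mathbb{Z}_+^d.$$
   Context: Jackson network with $d$ queues: arrival rates $\lambda_i\ge0$, service rates $\mu_i>0$, routing matrix $P=(p_{ij})_{i,j=1}^d$ nonnegative with $p_{ii}=0$, $\sum_jp_{ij}\le1$, $p_{i0}=1-\sum_jp_{ij}$. With $\epsilon^i$ the unit vectors, $q(\epsilon^i)=\lambda_i$, $q(-\epsilon^i)=\mu_ip_{i0}$, $q(\epsilon^j-\epsilon^i)=\mu_ip_{ij}$, $q=0$ otherwise; the process on $\mathbb{Z}_+^d$ has generator $\mathcal{L}f(y)=\sum_{z\in\mathbb{Z}_+^d}q(z-y)(f(z)-f(y))$. Hypothesis (A): $(q(x-y))_{x,y\in\mathbb{Z}^d}$ irreducible (equivalently spectral radius of $P$ $<1$ and for every $i$ some $\lambda_jp^{(n)}_{ji}>0$); then the traffic equations $\nu_j=\lambda_j+\sum_i\nu_ip_{ij}$ have a unique solution. $G=(I-P)^{-1}$. $Q_{ij}$: probability that the chain on $\{0,\dots,d\}$ with transitions $p_{ij}$ ($0$ absorbing) started at $i$ ever visits $j$ (time $0$ included). For $\gamma\in\mathbb{R}_+^d$, $\overrightarrow{\gamma_i}=(\gamma_i^1,\dots,\gamma_i^d)$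 with $\gamma_i^j=\log(1+Q_{ji}\gamma_i)$. *)

theory Defs
  imports "HOL-Analysis.Analysis"
begin

text \<open>Queues are indexed by a finite type 'n (so d = CARD('n)); the routing matrix is
  P :: real^'n^'n with p_ij = P$i$j; the exit probability is p_i0 = 1 - sum_j p_ij.\<close>

definition unitv :: "'n \<Rightarrow> ('n \<Rightarrow> int)" where
  "unitv i = (\<lambda>j. if j = i then 1 else 0)"

definition exit_prob :: "real^'n^'n \<Rightarrow> 'n::finite \<Rightarrow> real" where
  "exit_prob P i = 1 - (\<Sum>j\<in>UNIV. P$i$j)"

definition jrate :: "('n \<Rightarrow> real) \<Rightarrow> ('n \<Rightarrow> real) \<Rightarrow> real^'n^'n \<Rightarrow> ('n::finite \<Rightarrow> int) \<Rightarrow> real" where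
  "jrate lam mu P z =
     (\<Sum>i\<in>UNIV. (if z = unitv i then lam i else 0)
              + (if z = - unitv i then mu i * exit_prob P i else 0)
              + (\<Sum>j\<in>UNIV. if j \<noteq> i \<and> z = unitv j - unitv i then mu i * P$i$j else 0))"

definition nonneg_states :: "('n \<Rightarrow> int) set" where
  "nonneg_states = {x. \<forall>i. 0 \<le> x i}"

definition generator :: "('n \<Rightarrow> real) \<Rightarrow> ('n \<Rightarrow> real) \<Rightarrow> real^'n^'n
     \<Rightarrow> (('n::finite \<Rightarrow> int) \<Rightarrow> real) \<Rightarrow> ('n \<Rightarrow> int) \<Rightarrow> real" where
  "generator lam mu P f y =
     infsum (\<lambda>z. jrate lam mu P (z - y) * (f z - f y)) nonneg_states"

definition hypA :: "('n \<Rightarrow> real) \<Rightarrow> ('n \<Rightarrow> real) \<Rightarrow> real^'n^'n::finite \<Rightarrow> bool" where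
  "hypA lam mu P \<longleftrightarrow>
     (\<forall>x y. (x, y) \<in> {(a, b). jrate lam mu P (b - a) > 0}\<^sup>*)"

text \<open>First-passage probabilities of the routing chain on {0,...,d} (0 absorbing, i.e.
  the substochastic chain killed at exit): probability that the chain started at i
  visits j for the first time at step n (n = 0 allowed).\<close>
fun first_pass :: "real^'n^'n \<Rightarrow> nat \<Rightarrow> 'n::finite \<Rightarrow> 'n \<Rightarrow> real" where
  "first_pass P 0 i j = (if i = j then 1 else 0)"
| "first_pass P (Suc n) i j =
     (if i = j then 0 else (\<Sum>k\<in>UNIV. P$i$k * first_pass P n k j))"

definition hitQ :: "real^'n^'n \<Rightarrow> 'n::finite \<Rightarrow> 'n \<Rightarrow> real" where
  "hitQ P i j = (\<Sum>n. first_pass P n i j)"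

definition greenG :: "real^'n^'n \<Rightarrow> real^'n^'n::finite" where
  "greenG P = matrix_inv (mat 1 - P)"

end

theory Submission
  imports Defs "HOL-Library.Function_Algebras"
begin

text \<open>Write \<open>a\<^sub>j = 1 + Q\<^sub>j\<^sub>i \<gamma>\<^sub>i\<close>, so that \<open>f\<^sub>i(y) = \<Prod>\<^sub>j a\<^sub>j\<^bsup>y\<^sub>j\<^esup>\<close>.
  On such a product-form function the generator is \<open>f\<^sub>i(x)\<close> times a sum over queues \<open>k\<close> of
  an arrival term \<open>\<lambda>\<^sub>k (a\<^sub>k - 1)\<close> and, if \<open>x\<^sub>k > 0\<close>, a service term
  \<open>\<mu>\<^sub>k ((p\<^sub>k\<^sub>0 + \<Sum>\<^sub>j p\<^sub>k\<^sub>j a\<^sub>j) / a\<^sub>k - 1)\<close>. First-step analysis gives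
  \<open>\<Sum>\<^sub>j p\<^sub>k\<^sub>j Q\<^sub>j\<^sub>i = Q\<^sub>k\<^sub>i\<close> for \<open>k \<noteq> i\<close>, so \<open>a\<close> is harmonic off \<open>i\<close> and only the service term of
  queue \<open>i\<close> survives.

  The remaining quantities are read off \<open>G = (I - P)\<^sup>-\<^sup>1\<close>: with the return probability
  \<open>r\<^sub>i = \<Sum>\<^sub>m p\<^sub>i\<^sub>m Q\<^sub>m\<^sub>i\<close>, the column \<open>(Q\<^sub>j\<^sub>i)\<^sub>j\<close> solves \<open>(I - P) q = (1 - r\<^sub>i) e\<^sub>i\<close>, hence
  \<open>Q\<^sub>j\<^sub>i = (1 - r\<^sub>i) G\<^sub>j\<^sub>i\<close>, \<open>G\<^sub>i\<^sub>i = 1 / (1 - r\<^sub>i)\<close>, and by the traffic equations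
  \<open>\<Sum>\<^sub>k \<lambda>\<^sub>k Q\<^sub>k\<^sub>i = (1 - r\<^sub>i) \<nu>\<^sub>i\<close>. That \<open>I - P\<close> is invertible follows from (A): a nonzero fixed
  vector of \<open>P\<close> yields, at its maximum, a nonempty set of queues that routing never leaves,
  and the number of customers in such a set can never decrease along a jump.\<close>

lemma hitQ_self: "hitQ P i i = 1"
proof -
  have "(\<lambda>n. first_pass P n i i) = (\<lambda>n. if n = 0 then 1 else 0)"
    by (rule ext, case_tac n) auto
  then show ?thesis
    unfolding hitQ_def using sums_single[of 0 "\<lambda>_. 1::real"] by (simp add: sums_iff)
qed

definition return_prob :: "real^'n^'n \<Rightarrow> 'n::finite \<Rightarrow> real" where
  "return_prob P i = (\<Sum>m\<in>UNIV. P$i$m * hitQ P m i)"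

lemma sum_unitv: "(\<Sum>c\<in>C. unitv (i::'n::finite) c) = (if i \<in> C then 1 else 0)"
  unfolding unitv_def by (simp add: sum.delta)

lemma jrate_pos_imp_sum_nonneg:
  fixes P :: "real^'n^'n::finite"
  assumes closed: "\<And>j k. j \<in> C \<Longrightarrow> k \<notin> C \<Longrightarrow> P$j$k = 0"
    and no_exit: "\<And>j. j \<in> C \<Longrightarrow> exit_prob P j = 0"
    and pos: "0 < jrate lam mu P z"
  shows "0 \<le> (\<Sum>c\<in>C. z c)"
proof (rule ccontr)
  assume neg: "\<not> 0 \<le> (\<Sum>c\<in>C. z c)"
  have "z \<noteq> unitv i" for i
    using neg by (auto simp: sum_unitv split: if_splits)
  moreover have "exit_prob P i = 0" if "z = - unitv i" for i
    using neg no_exit that by (auto simp: sum_negf sum_unitv split: if_splits)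
  moreover have "P$i$j = 0" if "z = unitv j - unitv i" for i j
    using neg closed that by (auto simp: sum_subtractf sum_unitv split: if_splits)
  ultimately have "jrate lam mu P z = 0"
    unfolding jrate_def by (auto intro!: sum.neutral)
  with pos show False by simp
qed

lemma hypA_no_trapping_set:
  fixes P :: "real^'n^'n::finite"
  assumes A: "hypA lam mu P" and "i \<in> C"
    and closed: "\<And>j k. j \<in> C \<Longrightarrow> k \<notin> C \<Longrightarrow> P$j$k = 0"
    and no_exit: "\<And>j. j \<in> C \<Longrightarrow> exit_prob P j = 0"
  shows False
proof -
  have mono: "(\<Sum>c\<in>C. a c) \<le> (\<Sum>c\<in>C. b c)"
    if "(a, b) \<in> {(a, b). jrate lam mu P (b - a) > 0}\<^sup>*" for a b :: "'n \<Rightarrow> int"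
    using that
  proof (induction rule: rtrancl_induct)
    case (step y z)
    then have "0 < jrate lam mu P (z - y)" by simp
    then have "0 \<le> (\<Sum>c\<in>C. (z - y) c)"
      using jrate_pos_imp_sum_nonneg[OF closed no_exit] by blast
    with step.IH show ?case by (simp add: sum_subtractf)
  qed simp
  have "(\<Sum>c\<in>C. (\<lambda>_. 0::int) c) \<le> (\<Sum>c\<in>C. (- unitv i) c)"
    using A unfolding hypA_def by (intro mono) blast
  with \<open>i \<in> C\<close> show False by (simp add: sum_negf sum_unitv)
qed

lemma greenG_inverse:
  assumes "invertible (mat 1 - P)"
  shows "greenG P ** (mat 1 - P) = mat 1" and "(mat 1 - P) ** greenG P = mat 1"
  using someI_ex[OF assms[unfolded invertible_def]] by (auto simp: greenG_def matrix_inv_def)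

lemma greenG_column:
  assumes "invertible (mat 1 - P)" and "(mat 1 - P) *v q = c *s axis i 1"
  shows "q $ j = c * greenG P $ j $ i"
proof -
  have "q = greenG P *v (c *s axis i 1)"
    by (metis assms greenG_inverse(1) matrix_vector_mul_assoc matrix_vector_mul_lid)
  then show ?thesis
    by (simp add: matrix_vector_mult_def axis_def if_distrib if_distribR sum.delta cong: if_cong)
qed

lemma greenG_row:
  assumes "invertible (mat 1 - P)" and "nu v* (mat 1 - P) = lam"
  shows "nu $ i = (\<Sum>j\<in>UNIV. lam $ j * greenG P $ j $ i)"
proof -
  have "nu = lam v* greenG P"
    by (metis assms greenG_inverse(2) vector_matrix_mul_assoc vector_matrix_mul_rid)
  then show ?thesis by (simp add: vector_matrix_mult_def)
qed

lemma traffic_eq_greenG: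
  fixes P :: "real^'n^'n::finite"
  assumes inv: "invertible (mat 1 - P)"
    and traffic: "\<And>j. nu j = lam j + (\<Sum>i\<in>UNIV. nu i * P$i$j)"
  shows "nu i = (\<Sum>j\<in>UNIV. lam j * greenG P $ j $ i)"
proof -
  have "(\<chi> j. nu j) v* (mat 1 - P) = (\<chi> j. lam j)"
  proof -
    have "nu k - (\<Sum>j\<in>UNIV. nu j * P$j$k) = lam k" for k
      using traffic[of k] by linarith
    moreover have "(\<chi> j. nu j) v* (mat 1 - P) = (\<chi> j. nu j) - (\<chi> j. nu j) v* P"
      by (simp add: vector_matrix_mult_diff_rdistrib)
    ultimately show ?thesis
      by (simp add: vec_eq_iff vector_matrix_mult_def)
  qed
  from greenG_row[OF inv this] show ?thesis by simp
qed

lemma has_sum_point_if: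
  "((\<lambda>z. if Q \<and> z = a then c else 0) has_sum (if Q \<and> a \<in> A then c else (0::real))) A"
proof (cases "Q \<and> a \<in> A")
  case True
  then show ?thesis by (intro has_sum_finite_neutralI[where B="{a}"]) auto
qed (auto intro: has_sum_0)

lemma has_sum_point:
  "((\<lambda>z. if z = a then c else 0) has_sum (if a \<in> A then c else (0::real))) A"
  using has_sum_point_if[where Q=True] by (simp only: simp_thms)

lemma has_sum_sum:
  fixes f :: "'i \<Rightarrow> 'a \<Rightarrow> real"
  assumes "finite I" "\<And>k. k \<in> I \<Longrightarrow> (f k has_sum s k) A"
  shows "((\<lambda>z. \<Sum>k\<in>I. f k z) has_sum (\<Sum>k\<in>I. s k)) A"
  using assms by (induction I rule: finite_induct) (auto intro: has_sum_add)

lemma jump_term_if: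
  fixes z x d :: "'a \<Rightarrow> 'b::ab_group_add" and f :: "('a \<Rightarrow> 'b) \<Rightarrow> real"
  shows "(if Q \<and> z - x = d then r else 0) * (f z - f x)
       = (if Q \<and> z = x + d then r * (f (x + d) - f x) else 0)"
  by (auto simp: diff_eq_eq add.commute)

lemma jump_term:
  fixes z x d :: "'a \<Rightarrow> 'b::ab_group_add" and f :: "('a \<Rightarrow> 'b) \<Rightarrow> real"
  shows "(if z - x = d then r else 0) * (f z - f x)
       = (if z = x + d then r * (f (x + d) - f x) else 0)"
  using jump_term_if[where Q=True] by (simp only: simp_thms)

lemma generator_eq_sum:
  "generator lam mu P f x = (\<Sum>k\<in>UNIV.
      (if x + unitv k \<in> nonneg_states then lam k * (f (x + unitv k) - f x) else 0)
    + (if x - unitv k \<in> nonneg_states then mu k * exit_prob P k * (f (x - unitv k) - f x) else 0)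
    + (\<Sum>j\<in>UNIV. if j \<noteq> k \<and> x + (unitv j - unitv k) \<in> nonneg_states
         then mu k * P$k$j * (f (x + (unitv j - unitv k)) - f x) else 0))"
proof -
  have summand: "jrate lam mu P (z - x) * (f z - f x) = (\<Sum>k\<in>UNIV.
      (if z = x + unitv k then lam k * (f (x + unitv k) - f x) else 0)
    + (if z = x - unitv k then mu k * exit_prob P k * (f (x - unitv k) - f x) else 0)
    + (\<Sum>j\<in>UNIV. if j \<noteq> k \<and> z = x + (unitv j - unitv k)
         then mu k * P$k$j * (f (x + (unitv j - unitv k)) - f x) else 0))" for z
    unfolding jrate_def sum_distrib_right distrib_right
    by (simp only: jump_term jump_term_if add_uminus_conv_diff)
  show ?thesis
    unfolding generator_def summand
    by (intro infsumI has_sum_sum has_sum_add has_sum_point has_sum_point_if) simp_all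
qed

definition product_form :: "('n::finite \<Rightarrow> real) \<Rightarrow> ('n \<Rightarrow> int) \<Rightarrow> real" where
  "product_form a y = exp (\<Sum>j\<in>UNIV. ln (a j) * real_of_int (y j))"

lemma product_form_add: "product_form a (x + d) = product_form a x * product_form a d"
  by (simp add: product_form_def distrib_left sum.distrib exp_add)

lemma product_form_diff: "product_form a (x - d) = product_form a x / product_form a d"
  by (simp add: product_form_def right_diff_distrib sum_subtractf exp_diff)

lemma product_form_unitv: "0 < a k \<Longrightarrow> product_form a (unitv k) = a k"
  by (simp add: product_form_def unitv_def if_distrib cong: if_cong)

lemma add_unitv_in_nonneg_states: "x \<in> nonneg_states \<Longrightarrow> x + unitv k \<in> nonneg_states"
  by (simp add: nonneg_states_def unitv_def add_nonneg_nonneg)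

lemma diff_unitv_in_nonneg_states_iff:
  "x \<in> nonneg_states \<Longrightarrow> x - unitv k \<in> nonneg_states \<longleftrightarrow> 0 < x k"
  by (auto simp: nonneg_states_def unitv_def)

lemma move_in_nonneg_states_iff:
  "x \<in> nonneg_states \<Longrightarrow> j \<noteq> k \<Longrightarrow> x + (unitv j - unitv k) \<in> nonneg_states \<longleftrightarrow> 0 < x k"
  by (auto simp: nonneg_states_def unitv_def add_nonneg_nonneg)

lemma routing_sum_product_form:
  fixes P :: "real^'n^'n::finite"
  assumes a_pos: "\<And>j. 0 < a j" and x: "x \<in> nonneg_states" and busy: "0 < x k"
  shows "(\<Sum>j\<in>UNIV. if j \<noteq> k \<and> x + (unitv j - unitv k) \<in> nonneg_states
        then mu k * P$k$j * (product_form a (x + (unitv j - unitv k)) - product_form a x) else 0)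
      = mu k * product_form a x * ((\<Sum>j\<in>UNIV. P$k$j * a j) / a k - (\<Sum>j\<in>UNIV. P$k$j))"
proof -
  let ?F = "product_form a"
  have "(if j \<noteq> k \<and> x + (unitv j - unitv k) \<in> nonneg_states
      then mu k * P$k$j * (?F (x + (unitv j - unitv k)) - ?F x) else 0)
    = mu k * ?F x * (P$k$j * a j / a k - P$k$j)" for j
  proof (cases "j = k")
    case False
    then have "x + (unitv j - unitv k) \<in> nonneg_states"
      using busy by (simp add: move_in_nonneg_states_iff[OF x])
    moreover have "?F (x + (unitv j - unitv k)) = ?F x * a j / a k"
      using a_pos by (simp add: product_form_add product_form_diff product_form_unitv)
    ultimately show ?thesis
      using False by (simp add: algebra_simps)
  qed (use a_pos[of k] in simp)
  then show ?thesis
    by (simp only: sum_distrib_left[symmetric] sum_subtractf sum_divide_distrib)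
qed

lemma generator_product_form:
  fixes P :: "real^'n^'n::finite"
  assumes a_pos: "\<And>j. 0 < a j" and x: "x \<in> nonneg_states"
  shows "generator lam mu P (product_form a) x = product_form a x * (\<Sum>k\<in>UNIV.
      lam k * (a k - 1)
    + (if 0 < x k then mu k * ((exit_prob P k + (\<Sum>j\<in>UNIV. P$k$j * a j)) / a k - 1) else 0))"
  unfolding generator_eq_sum sum_distrib_left
proof (rule sum.cong[OF refl])
  fix k
  let ?F = "product_form a"
  have moves: "(\<Sum>j\<in>UNIV. if j \<noteq> k \<and> x + (unitv j - unitv k) \<in> nonneg_states
        then mu k * P$k$j * (?F (x + (unitv j - unitv k)) - ?F x) else 0)
      = (if 0 < x k then mu k * ?F x * ((\<Sum>j\<in>UNIV. P$k$j * a j) / a k - (\<Sum>j\<in>UNIV. P$k$j)) else 0)"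
    using routing_sum_product_form[OF a_pos x]
    by (auto intro!: sum.neutral simp: move_in_nonneg_states_iff[OF x])
  show "(if x + unitv k \<in> nonneg_states then lam k * (?F (x + unitv k) - ?F x) else 0)
    + (if x - unitv k \<in> nonneg_states then mu k * exit_prob P k * (?F (x - unitv k) - ?F x) else 0)
    + (\<Sum>j\<in>UNIV. if j \<noteq> k \<and> x + (unitv j - unitv k) \<in> nonneg_states
         then mu k * P$k$j * (?F (x + (unitv j - unitv k)) - ?F x) else 0)
    = ?F x * (lam k * (a k - 1)
    + (if 0 < x k then mu k * ((exit_prob P k + (\<Sum>j\<in>UNIV. P$k$j * a j)) / a k - 1) else 0))"
    unfolding moves using a_pos[of k]
    by (simp add: add_unitv_in_nonneg_states[OF x] diff_unitv_in_nonneg_states_iff[OF x]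
        product_form_add product_form_diff product_form_unitv exit_prob_def field_simps)
qed

context
  fixes P :: "real^'n^'n::finite"
  assumes P_nonneg: "\<And>i j. 0 \<le> P$i$j"
    and P_rows: "\<And>i. (\<Sum>j\<in>UNIV. P$i$j) \<le> 1"
begin

lemma first_pass_nonneg: "0 \<le> first_pass P n k i"
  by (induction n arbitrary: k) (auto intro!: sum_nonneg mult_nonneg_nonneg P_nonneg)

lemma sum_first_pass_le_1: "(\<Sum>n<N. first_pass P n k i) \<le> 1"
proof (induction N arbitrary: k)
  case 0
  then show ?case by simp
next
  case (Suc N)
  show ?case
  proof (cases "k = i")
    case True
    then show ?thesis by (simp only: sum.lessThan_Suc_shift) simp
  next
    case False
    have "(\<Sum>n<Suc N. first_pass P n k i) = (\<Sum>n<N. \<Sum>m\<in>UNIV. P$k$m * first_pass P n m i)"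
      using False by (simp only: sum.lessThan_Suc_shift) simp
    also have "\<dots> = (\<Sum>m\<in>UNIV. P$k$m * (\<Sum>n<N. first_pass P n m i))"
      by (subst sum.swap) (simp add: sum_distrib_left)
    also have "\<dots> \<le> (\<Sum>m\<in>UNIV. P$k$m)"
      using sum_mono[OF mult_left_mono[OF Suc P_nonneg]] by simp
    also have "\<dots> \<le> 1" by (rule P_rows)
    finally show ?thesis .
  qed
qed

lemma summable_first_pass: "summable (\<lambda>n. first_pass P n k i)"
  by (rule summableI_nonneg_bounded) (use first_pass_nonneg sum_first_pass_le_1 in auto)

lemma hitQ_nonneg: "0 \<le> hitQ P k i"
  unfolding hitQ_def by (intro suminf_nonneg summable_first_pass first_pass_nonneg)

lemma hitQ_first_step:
  assumes "k \<noteq> i"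
  shows "hitQ P k i = (\<Sum>m\<in>UNIV. P$k$m * hitQ P m i)"
proof -
  have "hitQ P k i = (\<Sum>n. first_pass P (Suc n) k i)"
    using suminf_split_head[OF summable_first_pass[of k i]] assms unfolding hitQ_def by simp
  also have "\<dots> = (\<Sum>n. \<Sum>m\<in>UNIV. P$k$m * first_pass P n m i)"
    using assms by simp
  also have "\<dots> = (\<Sum>m\<in>UNIV. \<Sum>n. P$k$m * first_pass P n m i)"
    by (intro suminf_sum summable_mult summable_first_pass)
  also have "\<dots> = (\<Sum>m\<in>UNIV. P$k$m * hitQ P m i)"
    unfolding hitQ_def by (intro sum.cong refl suminf_mult summable_first_pass)
  finally show ?thesis .
qed

lemma fixed_vector_trapping_set:
  assumes fixed: "P *v w = w" and pos: "0 < w$j0"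
  obtains C where "C \<noteq> {}" "\<And>j k. j \<in> C \<Longrightarrow> k \<notin> C \<Longrightarrow> P$j$k = 0"
    "\<And>j. j \<in> C \<Longrightarrow> exit_prob P j = 0"
proof
  define M where "M = Max (range (\<lambda>j. w$j))"
  define C where "C = {j. w$j = M}"
  have le_M: "w$j \<le> M" for j
    unfolding M_def by (rule Max_ge) auto
  have "M \<in> range (\<lambda>j. w$j)"
    unfolding M_def by (rule Max_in) auto
  then show "C \<noteq> {}"
    unfolding C_def by auto
  have M_pos: "0 < M"
    using le_M[of j0] pos by simp
  fix j assume "j \<in> C"
  then have "M = (\<Sum>k\<in>UNIV. P$j$k * w$k)"
    using arg_cong[OF fixed, of "\<lambda>v. v$j"] by (simp add: C_def matrix_vector_mult_def)
  moreover have "(\<Sum>k\<in>UNIV. P$j$k * (M - w$k)) = (\<Sum>k\<in>UNIV. P$j$k) * M - (\<Sum>k\<in>UNIV. P$j$k * w$k)"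
    by (simp add: right_diff_distrib sum_subtractf sum_distrib_right)
  ultimately have "(\<Sum>k\<in>UNIV. P$j$k * (M - w$k)) = M * (\<Sum>k\<in>UNIV. P$j$k) - M"
    by (simp add: mult.commute)
  moreover have terms_nonneg: "0 \<le> P$j$k * (M - w$k)" for k
    using P_nonneg le_M by simp
  moreover have "M * (\<Sum>k\<in>UNIV. P$j$k) \<le> M"
    using P_rows[of j] M_pos by simp
  ultimately have sums: "(\<Sum>k\<in>UNIV. P$j$k * (M - w$k)) = 0" "M * (\<Sum>k\<in>UNIV. P$j$k) = M"
    using sum_nonneg[of UNIV "\<lambda>k. P$j$k * (M - w$k)"] M_pos by auto
  then show "exit_prob P j = 0"
    using M_pos by (simp add: exit_prob_def)
  fix k assume "k \<notin> C"
  then have "w$k < M"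
    using le_M[of k] by (simp add: C_def)
  moreover have "P$j$k * (M - w$k) = 0"
    using sums(1) terms_nonneg sum_nonneg_eq_0_iff[of UNIV "\<lambda>k. P$j$k * (M - w$k)"] by simp
  ultimately show "P$j$k = 0" by simp
qed

lemma invertible_I_minus_P:
  assumes A: "hypA lam mu P"
  shows "invertible (mat 1 - P)"
proof (rule ccontr)
  assume "\<not> invertible (mat 1 - P)"
  then obtain v where v: "(mat 1 - P) *v v = 0" "v \<noteq> 0"
    using invertible_left_inverse matrix_left_invertible_ker by blast
  have no_pos_fixed: False if "P *v w = w" "0 < w$j" for w j
    using fixed_vector_trapping_set[OF that]
    by (metis all_not_in_conv hypA_no_trapping_set[OF A])
  have fixed: "P *v v = v"
    using v(1) by (simp add: matrix_vector_mult_diff_rdistrib)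
  then have fixed_neg: "P *v (- v) = - v"
    by (simp add: linear_neg[OF matrix_vector_mul_linear])
  obtain j where "v$j \<noteq> 0"
    using v(2) by (metis vec_eq_iff zero_index)
  then show False
    using no_pos_fixed[OF fixed, of j] no_pos_fixed[OF fixed_neg, of j] by (cases "0 < v$j") auto
qed

lemma hitQ_eq_greenG:
  assumes inv: "invertible (mat 1 - P)"
  shows "hitQ P j i = (1 - return_prob P i) * greenG P $ j $ i"
proof -
  have "(mat 1 - P) *v (\<chi> j. hitQ P j i) = (\<chi> j. hitQ P j i) - P *v (\<chi> j. hitQ P j i)"
    by (simp add: matrix_vector_mult_diff_rdistrib)
  also have "\<dots> = (1 - return_prob P i) *s axis i 1"
  proof (subst vec_eq_iff, intro allI)
    fix k
    show "((\<chi> j. hitQ P j i) - P *v (\<chi> j. hitQ P j i)) $ k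
        = ((1 - return_prob P i) *s axis i 1) $ k"
    proof (cases "k = i")
      case False
      then show ?thesis
        using hitQ_first_step[OF False, symmetric]
        by (simp add: matrix_vector_mult_def axis_def)
    qed (simp add: matrix_vector_mult_def hitQ_self return_prob_def)
  qed
  finally have "(mat 1 - P) *v (\<chi> j. hitQ P j i) = (1 - return_prob P i) *s axis i 1" .
  from greenG_column[OF inv this, of j] show ?thesis
    by (simp only: vec_lambda_beta)
qed

lemma return_prob_greenG:
  assumes "invertible (mat 1 - P)"
  shows "(1 - return_prob P i) * greenG P $ i $ i = 1"
  using hitQ_eq_greenG[OF assms, of i i] by (simp add: hitQ_self)

lemma sum_arrivals_hitQ:
  assumes inv: "invertible (mat 1 - P)"
    and traffic: "\<And>j. nu j = lam j + (\<Sum>i\<in>UNIV. nu i * P$i$j)"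
  shows "(\<Sum>k\<in>UNIV. lam k * hitQ P k i) = (1 - return_prob P i) * nu i"
  unfolding traffic_eq_greenG[OF inv traffic, of i] hitQ_eq_greenG[OF inv]
  by (simp add: sum_distrib_left algebra_simps)

lemma generator_hitQ_product_form:
  fixes i :: 'n and g :: real
  assumes g: "0 \<le> g" and x: "x \<in> nonneg_states"
  defines "a \<equiv> \<lambda>j. 1 + hitQ P j i * g"
  shows "generator lam mu P (product_form a) x = g * product_form a x
    * ((\<Sum>k\<in>UNIV. lam k * hitQ P k i)
       - (if 0 < x i then mu i * (1 - return_prob P i) / (1 + g) else 0))"
proof -
  have a_pos: "0 < a j" for j
    using g hitQ_nonneg by (simp add: a_def add_pos_nonneg)
  have outflow: "exit_prob P k + (\<Sum>j\<in>UNIV. P$k$j * a j) = 1 + g * (\<Sum>j\<in>UNIV. P$k$j * hitQ P j i)" for k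
    by (simp add: exit_prob_def a_def sum.distrib sum_distrib_left algebra_simps)
  have "(if 0 < x k then mu k * ((exit_prob P k + (\<Sum>j\<in>UNIV. P$k$j * a j)) / a k - 1) else 0)
      = (if k = i then - g * (if 0 < x i then mu i * (1 - return_prob P i) / (1 + g) else 0) else 0)" for k
  proof (cases "k = i")
    case True
    have "a i = 1 + g" "1 + g \<noteq> 0"
      using g by (simp_all add: a_def hitQ_self)
    moreover have "exit_prob P i + (\<Sum>j\<in>UNIV. P$i$j * a j) = 1 + g * return_prob P i"
      unfolding outflow return_prob_def by (simp add: mult.commute)
    ultimately show ?thesis
      unfolding True by (simp add: field_simps)
  next
    case False
    then have "exit_prob P k + (\<Sum>j\<in>UNIV. P$k$j * a j) = a k"
      unfolding outflow using hitQ_first_step[OF False]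
      by (simp add: a_def mult.commute)
    with False a_pos[of k] show ?thesis
      by simp
  qed
  then have services: "(\<Sum>k\<in>UNIV. if 0 < x k then mu k * ((exit_prob P k + (\<Sum>j\<in>UNIV. P$k$j * a j)) / a k - 1) else 0)
      = - g * (if 0 < x i then mu i * (1 - return_prob P i) / (1 + g) else 0)"
    by simp
  have arrivals: "(\<Sum>k\<in>UNIV. lam k * (a k - 1)) = g * (\<Sum>k\<in>UNIV. lam k * hitQ P k i)"
    by (simp add: a_def sum_distrib_left algebra_simps)
  show ?thesis
    unfolding generator_product_form[OF a_pos x] sum.distrib services arrivals
    by (simp add: algebra_simps)
qed

end

theorem lemma5p1:
  fixes lam mu nu gam :: "'n::finite \<Rightarrow> real" and P :: "real^'n^'n"
  assumes lam_nonneg: "\<And>i. 0 \<le> lam i"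
    and mu_pos: "\<And>i. 0 < mu i"
    and P_nonneg: "\<And>i j. 0 \<le> P$i$j"
    and P_diag: "\<And>i. P$i$i = 0"
    and P_rows: "\<And>i. (\<Sum>j\<in>UNIV. P$i$j) \<le> 1"
    and A: "hypA lam mu P"
    and traffic: "\<And>j. nu j = lam j + (\<Sum>i\<in>UNIV. nu i * P$i$j)"
    and gam_nonneg: "\<And>i. 0 \<le> gam i"
    and x: "x \<in> nonneg_states"
  shows "generator lam mu P
           (\<lambda>y. exp (\<Sum>j\<in>UNIV. ln (1 + hitQ P j i * gam i) * real_of_int (y j))) x
         = gam i / (greenG P)$i$i
             * (nu i - (if x i > 0 then mu i / (1 + gam i) else 0))
             * exp (\<Sum>j\<in>UNIV. ln (1 + hitQ P j i * gam i) * real_of_int (x j))"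
proof -
  let ?f = "product_form (\<lambda>j. 1 + hitQ P j i * gam i)"
  have inv: "invertible (mat 1 - P)"
    by (rule invertible_I_minus_P[OF P_nonneg P_rows A])
  have escape: "1 - return_prob P i = 1 / greenG P $ i $ i"
    using return_prob_greenG[OF P_nonneg P_rows inv, of i]
    by (metis divide_eq_eq mult_not_zero zero_neq_one)
  have "generator lam mu P ?f x
      = gam i * ?f x * ((1 - return_prob P i) * nu i
          - (if 0 < x i then mu i * (1 - return_prob P i) / (1 + gam i) else 0))"
    using generator_hitQ_product_form[OF P_nonneg P_rows gam_nonneg x, of lam mu i]
    unfolding sum_arrivals_hitQ[OF P_nonneg P_rows inv traffic] .
  also have "\<dots> = gam i / greenG P $ i $ i
      * (nu i - (if 0 < x i then mu i / (1 + gam i) else 0)) * ?f x"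
    unfolding escape by (simp add: algebra_simps)
  also have "?f = (\<lambda>y. exp (\<Sum>j\<in>UNIV. ln (1 + hitQ P j i * gam i) * real_of_int (y j)))"
    by (simp add: fun_eq_iff product_form_def)
  finally show ?thesis .
qed

end
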